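(* Let $r$ be a positive integer with binary bit length $\ell(r)$, and let $A$ and $B$ be real symmetric positive semidefinite matrices with $\|A\|,\|B\|\leq1$ such that $I-A\approx_{\epsilon}I-B$ and $I-B\approx_{\epsilon}I-A$, where $0\le\epsilon\leq1/(2\ell(r))$. Then $I-A^r\approx_{2\epsilon\ell(r)}I-B^r$.
   Context: $\|\cdot\|$ is the spectral norm. For real symmetric $X,Y$ and $\epsilon\ge0$, $X\approx_\epsilon Y$ means $(1-\epsilon)v^TYv\le v^TXv\le(1+\epsilon)v^TYv$ for all vectors $v$. *)

theory Defs
  imports "HOL-Analysis.Analysis"
begin

fun matpow :: "real^'n^'n \<Rightarrow> nat \<Rightarrow> real^'n^'n" where
  "matpow A 0 = mat 1"
| "matpow A (Suc k) = A ** matpow A k"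

fun bit_length :: "nat \<Rightarrow> nat" where
  "bit_length n = (if n = 0 then 0 else 1 + bit_length (n div 2))"

declare bit_length.simps[simp del]

definition spec_norm :: "real^'n^'n \<Rightarrow> real" where
  "spec_norm A = onorm (\<lambda>x. A *v x)"

definition symmetric_mat :: "real^'n^'n \<Rightarrow> bool" where
  "symmetric_mat A \<longleftrightarrow> transpose A = A"

definition psd :: "real^'n^'n \<Rightarrow> bool" where
  "psd A \<longleftrightarrow> symmetric_mat A \<and> (\<forall>v. 0 \<le> v \<bullet> (A *v v))"

definition approx_eps :: "real^'n^'n \<Rightarrow> real \<Rightarrow> real^'n^'n \<Rightarrow> bool" where
  "approx_eps X eps Y \<longleftrightarrow>
     (\<forall>v. (1 - eps) * (v \<bullet> (Y *v v)) \<le> v \<bullet> (X *v v) \<and>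
          v \<bullet> (X *v v) \<le> (1 + eps) * (v \<bullet> (Y *v v)))"

end

theory Submission
  imports Defs
begin

text \<open>
  Let \<open>c j = v \<bullet> A^j v\<close>. Telescoping writes \<open>v \<bullet> (B^r - A^r) v\<close> as
  \<open>\<Sum>k<r. (B^k v) \<bullet> (B - A) (A^(r-1-k) v)\<close>, and polarizing
  \<open>\<bar>z \<bullet> (B - A) z\<bar> \<le> \<epsilon> z \<bullet> (I - B) z\<close> bounds each term by \<open>\<epsilon>/2\<close> times the
  \<open>(I - B)\<close>-energies of \<open>B^k v\<close> and \<open>A^(r-1-k) v\<close>; the second hypothesis bounds the latter
  by \<open>(1 + \<epsilon>)\<close> times their \<open>(I - A)\<close>-energies. For PSD \<open>A\<close> the gaps \<open>c j - c (j+1)\<close>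
  decrease, the second differences being \<open>w \<bullet> A^j w \<ge> 0\<close> with \<open>w = v - A v\<close>, so the
  energies \<open>c (2k) - c (2k+1)\<close> of the vectors \<open>A^k v\<close> sum to at most \<open>c 0 - c r = v \<bullet> (I - A^r) v\<close>.
\<close>

lemma matpow_Suc_right: "matpow A (Suc k) = matpow A k ** A"
  by (induction k) (simp_all add: matrix_mul_assoc)

lemma matpow_Suc_mult_vec [simp]: "matpow A (Suc k) *v v = A *v (matpow A k *v v)"
  by (simp add: matrix_vector_mul_assoc)

lemma matpow_commute: "A ** matpow A k = matpow A k ** A"
  by (metis matpow.simps(2) matpow_Suc_right)

declare matpow.simps(2) [simp del]

lemma matpow_Suc_right_mult_vec: "matpow A (Suc k) *v v = matpow A k *v (A *v v)"
  by (simp only: matpow_Suc_right matrix_vector_mul_assoc)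

lemma matpow_add_mult_vec: "matpow A (m + n) *v v = matpow A m *v (matpow A n *v v)"
  by (induction m) simp_all

lemma inner_mat_one_minus:
  fixes X :: "real^'n^'n"
  shows "v \<bullet> ((mat 1 - X) *v v) = v \<bullet> v - v \<bullet> (X *v v)"
  by (simp add: matrix_vector_mult_diff_rdistrib inner_diff_right)

lemma symmetric_mat_inner:
  assumes "symmetric_mat A"
  shows "x \<bullet> (A *v y) = (A *v x) \<bullet> y"
  by (metis assms dot_lmul_matrix symmetric_mat_def transpose_matrix_vector)

lemma symmetric_mat_matpow:
  assumes "symmetric_mat A"
  shows "symmetric_mat (matpow A k)"
proof (induction k)
  case 0
  then show ?case by (simp add: symmetric_mat_def)
next
  case (Suc k)
  then show ?case
    using assms
    by (simp add: symmetric_mat_def matrix_transpose_mul matpow_Suc_right matpow_commute)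
qed

lemma inner_matpow_double_add:
  assumes "symmetric_mat A"
  shows "v \<bullet> (matpow A (i + i + t) *v v) = (matpow A i *v v) \<bullet> (matpow A t *v (matpow A i *v v))"
proof -
  have "v \<bullet> (matpow A (i + i + t) *v v) = v \<bullet> (matpow A i *v (matpow A (t + i) *v v))"
    by (simp add: matpow_add_mult_vec[symmetric] ac_simps)
  also have "\<dots> = (matpow A i *v v) \<bullet> (matpow A t *v (matpow A i *v v))"
    by (simp add: symmetric_mat_inner[OF symmetric_mat_matpow[OF assms]] matpow_add_mult_vec)
  finally show ?thesis .
qed

lemma psd_matpow:
  assumes "psd A"
  shows "psd (matpow A k)"
proof -
  have sym: "symmetric_mat A" and nonneg: "\<And>w. 0 \<le> w \<bullet> (A *v w)"
    using assms by (simp_all add: psd_def)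
  have "0 \<le> v \<bullet> (matpow A k *v v)" for v
  proof (cases "even k")
    case True
    then obtain i where "k = i + i" by (metis evenE mult_2)
    then show ?thesis using inner_matpow_double_add[OF sym, of v i 0] by simp
  next
    case False
    then obtain i where "k = i + i + 1" by (metis oddE mult_2)
    then show ?thesis using inner_matpow_double_add[OF sym, of v i 1] nonneg by simp
  qed
  then show ?thesis by (simp add: psd_def symmetric_mat_matpow[OF sym])
qed

lemma psd_inner_matpow_gap_decreasing:
  assumes "psd A"
  shows "v \<bullet> (matpow A (Suc j) *v v) - v \<bullet> (matpow A (Suc (Suc j)) *v v)
    \<le> v \<bullet> (matpow A j *v v) - v \<bullet> (matpow A (Suc j) *v v)"
proof -
  have sym: "symmetric_mat A" using assms by (simp add: psd_def)
  define w where "w = v - A *v v"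
  have "w \<bullet> (matpow A j *v w)
      = v \<bullet> (matpow A j *v v) - v \<bullet> (matpow A j *v (A *v v))
        - (A *v v) \<bullet> (matpow A j *v v) + (A *v v) \<bullet> (matpow A j *v (A *v v))"
    by (simp add: w_def matrix_vector_mult_diff_distrib inner_diff_left inner_diff_right)
  also have "\<dots> = v \<bullet> (matpow A j *v v) - 2 * (v \<bullet> (matpow A (Suc j) *v v))
        + v \<bullet> (matpow A (Suc (Suc j)) *v v)"
    by (simp add: matpow_Suc_right_mult_vec[symmetric] symmetric_mat_inner[OF sym, symmetric])
  finally have "w \<bullet> (matpow A j *v w) = \<dots>" .
  moreover have "0 \<le> w \<bullet> (matpow A j *v w)"
    using psd_matpow[OF assms] by (simp add: psd_def)
  ultimately show ?thesis by linarith
qed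

lemma psd_sum_energy_matpow_le:
  assumes "psd A"
  shows "(\<Sum>k<r. (matpow A k *v v) \<bullet> ((mat 1 - A) *v (matpow A k *v v)))
    \<le> v \<bullet> ((mat 1 - matpow A r) *v v)"
proof -
  have sym: "symmetric_mat A" using assms by (simp add: psd_def)
  define d where "d j = v \<bullet> (matpow A j *v v) - v \<bullet> (matpow A (Suc j) *v v)" for j
  have energy: "(matpow A k *v v) \<bullet> ((mat 1 - A) *v (matpow A k *v v)) = d (2 * k)" for k
    using inner_matpow_double_add[OF sym, of v k 0] inner_matpow_double_add[OF sym, of v k 1]
    by (simp add: d_def inner_mat_one_minus mult_2)
  have "antimono d"
    using psd_inner_matpow_gap_decreasing[OF assms]
    by (intro antimono_iff_le_Suc[THEN iffD2]) (simp add: d_def)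
  then have "(\<Sum>k<r. d (2 * k)) \<le> (\<Sum>k<r. d k)"
    by (intro sum_mono) (simp add: antimonoD)
  also have "(\<Sum>k<r. d k) = v \<bullet> ((mat 1 - matpow A r) *v v)"
    using sum_lessThan_telescope[of "\<lambda>j. - (v \<bullet> (matpow A j *v v))" r]
    by (simp add: d_def inner_mat_one_minus)
  finally show ?thesis by (simp add: energy)
qed

lemma spec_norm_le_one_inner_mat_one_minus_matpow:
  assumes "spec_norm B \<le> 1"
  shows "0 \<le> v \<bullet> ((mat 1 - matpow B k) *v v)"
proof -
  have norm_le: "norm (matpow B k *v v) \<le> norm v" for k
  proof (induction k)
    case (Suc k)
    have "norm (B *v (matpow B k *v v)) \<le> spec_norm B * norm (matpow B k *v v)"
      unfolding spec_norm_def by (rule onorm[OF matrix_vector_mul_bounded_linear])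
    also have "\<dots> \<le> norm (matpow B k *v v)"
      using mult_right_mono[OF assms norm_ge_zero] by simp
    finally show ?case using Suc by simp
  qed simp
  have "v \<bullet> (matpow B k *v v) \<le> norm v * norm (matpow B k *v v)"
    by (rule norm_cauchy_schwarz)
  also have "\<dots> \<le> v \<bullet> v"
    using norm_le[of k] by (simp add: mult_left_mono power2_norm_eq_inner[symmetric] power2_eq_square)
  finally show ?thesis by (simp add: inner_mat_one_minus)
qed

lemma approx_eps_iff_abs:
  "approx_eps X e Y \<longleftrightarrow> (\<forall>v. \<bar>v \<bullet> (X *v v) - v \<bullet> (Y *v v)\<bar> \<le> e * (v \<bullet> (Y *v v)))"
  unfolding approx_eps_def by (auto simp: abs_le_iff algebra_simps)

lemma approx_eps_mono:
  assumes "approx_eps X e Y" "e \<le> e'" "\<And>v. 0 \<le> v \<bullet> (Y *v v)"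
  shows "approx_eps X e' Y"
  using assms order_trans mult_right_mono unfolding approx_eps_iff_abs by blast

lemma symmetric_mat_polarization_abs_le:
  assumes "symmetric_mat E" and bound: "\<And>z. \<bar>z \<bullet> (E *v z)\<bar> \<le> e * (z \<bullet> (M *v z))"
  shows "\<bar>x \<bullet> (E *v y)\<bar> \<le> e / 2 * (x \<bullet> (M *v x) + y \<bullet> (M *v y))"
proof -
  have "y \<bullet> (E *v x) = x \<bullet> (E *v y)"
    using symmetric_mat_inner[OF assms(1), of y x] by (simp add: inner_commute)
  then have polar: "4 * (x \<bullet> (E *v y)) = (x + y) \<bullet> (E *v (x + y)) - (x - y) \<bullet> (E *v (x - y))"
    by (simp add: matrix_vector_right_distrib matrix_vector_mult_diff_distrib
        inner_add_left inner_add_right inner_diff_left inner_diff_right)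
  have parallelogram: "(x + y) \<bullet> (M *v (x + y)) + (x - y) \<bullet> (M *v (x - y))
      = 2 * (x \<bullet> (M *v x) + y \<bullet> (M *v y))"
    by (simp add: matrix_vector_right_distrib matrix_vector_mult_diff_distrib
        inner_add_left inner_add_right inner_diff_left inner_diff_right)
  have "\<bar>4 * (x \<bullet> (E *v y))\<bar> \<le> e * ((x + y) \<bullet> (M *v (x + y))) + e * ((x - y) \<bullet> (M *v (x - y)))"
    using polar bound[of "x + y"] bound[of "x - y"] by linarith
  also have "\<dots> = 2 * e * (x \<bullet> (M *v x) + y \<bullet> (M *v y))"
    using parallelogram by (simp add: algebra_simps)
  finally show ?thesis by simp
qed

lemma matpow_diff_mult_vec:
  "matpow A r *v v - matpow B r *v v =
    (\<Sum>k<r. matpow A k *v ((A - B) *v (matpow B (r - 1 - k) *v v)))"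
proof (induction r)
  case (Suc r)
  have "matpow A (Suc r) *v v - matpow B (Suc r) *v v
      = A *v (matpow A r *v v - matpow B r *v v) + (A - B) *v (matpow B r *v v)"
    by (simp add: matrix_vector_mult_diff_distrib matrix_vector_mult_diff_rdistrib)
  also have "\<dots> = (\<Sum>k<r. matpow A (Suc k) *v ((A - B) *v (matpow B (r - 1 - k) *v v)))
      + (A - B) *v (matpow B r *v v)"
    using Suc by (simp add: vec.sum)
  also have "\<dots> = (\<Sum>k<Suc r. matpow A k *v ((A - B) *v (matpow B (Suc r - 1 - k) *v v)))"
    by (subst sum.lessThan_Suc_shift) simp
  finally show ?case .
qed simp

lemma relative_bound_of_abs_diff_le:
  fixes a b e :: real
  assumes "0 \<le> b" "0 \<le> e" "e \<le> 1/2" and diff: "\<bar>a - b\<bar> \<le> e / 2 * ((1 + e) * a + b)"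
  shows "(1 - 2 * e) * b \<le> a" "a \<le> (1 + 2 * e) * b"
proof -
  have ee: "e * e \<le> e / 2" using assms(2,3) mult_left_mono[of e "1/2" e] by simp
  define p where "p = 1 + e/2 + e * e / 2"
  define q where "q = 1 - e/2 - e * e / 2"
  have "p > 0" "q > 0"
    using assms(2,3) ee mult_nonneg_nonneg[OF assms(2,2)] unfolding p_def q_def by linarith+
  have "(1 - e/2) * b \<le> p * a" "q * a \<le> (1 + e/2) * b"
    using abs_le_D1[OF diff] abs_le_D2[OF diff]
    by (simp_all add: p_def q_def algebra_simps add_divide_distrib)
  moreover have "(1 - 2 * e) * p \<le> 1 - e/2"
  proof -
    have "1 - e/2 - (1 - 2 * e) * p = e + e * e / 2 + e * e * e"
      by (simp add: p_def field_simps)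
    moreover have "0 \<le> e * e * e" using assms(2) by simp
    ultimately show ?thesis using assms(2) zero_le_square[of e] by linarith
  qed
  moreover have "1 + e/2 \<le> (1 + 2 * e) * q"
  proof -
    have "(1 + 2 * e) * q - (1 + e/2) = e * (1 - 3 * e / 2 - e * e)"
      by (simp add: q_def field_simps)
    moreover have "0 \<le> e * (1 - 3 * e / 2 - e * e)"
      using assms(2,3) ee by (intro mult_nonneg_nonneg) linarith+
    ultimately show ?thesis by linarith
  qed
  ultimately have "p * ((1 - 2 * e) * b) \<le> p * a" "q * a \<le> q * ((1 + 2 * e) * b)"
    using mult_right_mono[OF _ assms(1)] by (smt (verit) mult.commute mult.left_commute)+
  with \<open>p > 0\<close> \<open>q > 0\<close> show "(1 - 2 * e) * b \<le> a" "a \<le> (1 + 2 * e) * b"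
    by simp_all
qed

lemma symmetric_mat_diff:
  assumes "symmetric_mat A" "symmetric_mat B"
  shows "symmetric_mat (A - B)"
  using assms by (simp add: symmetric_mat_def transpose_def vec_eq_iff)

lemma abs_inner_one_minus_matpow_diff_le:
  fixes A B :: "real^'n^'n" and v :: "real^'n" and r :: nat
  assumes "psd A" "psd B"
    and AB: "approx_eps (mat 1 - A) \<epsilon> (mat 1 - B)"
    and BA: "approx_eps (mat 1 - B) \<epsilon> (mat 1 - A)"
    and "0 \<le> \<epsilon>"
  defines "a \<equiv> v \<bullet> ((mat 1 - matpow A r) *v v)" and "b \<equiv> v \<bullet> ((mat 1 - matpow B r) *v v)"
  shows "\<bar>a - b\<bar> \<le> \<epsilon> / 2 * ((1 + \<epsilon>) * a + b)"
proof -
  define E where "E = B - A"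
  define M where "M = mat 1 - B"
  define x where "x k = matpow B k *v v" for k
  define y where "y k = matpow A (r - 1 - k) *v v" for k
  have symA: "symmetric_mat A" and symB: "symmetric_mat B"
    using assms(1,2) by (simp_all add: psd_def)
  then have sym: "symmetric_mat E" by (simp add: E_def symmetric_mat_diff)
  have E_bound: "\<bar>z \<bullet> (E *v z)\<bar> \<le> \<epsilon> * (z \<bullet> (M *v z))" for z
    using AB by (simp add: approx_eps_iff_abs E_def M_def inner_mat_one_minus
        matrix_vector_mult_diff_rdistrib inner_diff_right)
  have M_le: "z \<bullet> (M *v z) \<le> (1 + \<epsilon>) * (z \<bullet> ((mat 1 - A) *v z))" for z
    using BA by (simp add: approx_eps_def M_def)
  have "a - b = v \<bullet> (matpow B r *v v - matpow A r *v v)"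
    by (simp add: a_def b_def inner_mat_one_minus inner_diff_right)
  also have "\<dots> = (\<Sum>k<r. v \<bullet> (matpow B k *v (E *v y k)))"
    by (simp add: matpow_diff_mult_vec inner_sum_right E_def y_def)
  also have "\<dots> = (\<Sum>k<r. x k \<bullet> (E *v y k))"
    by (simp add: x_def symmetric_mat_inner[OF symmetric_mat_matpow[OF symB]])
  finally have "a - b = (\<Sum>k<r. x k \<bullet> (E *v y k))" .
  then have "\<bar>a - b\<bar> \<le> (\<Sum>k<r. \<bar>x k \<bullet> (E *v y k)\<bar>)"
    by (simp add: sum_abs)
  also have "\<dots> \<le> (\<Sum>k<r. \<epsilon> / 2 * (x k \<bullet> (M *v x k) + y k \<bullet> (M *v y k)))"
    by (intro sum_mono symmetric_mat_polarization_abs_le[OF sym E_bound])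
  also have "\<dots> = \<epsilon> / 2 * ((\<Sum>k<r. x k \<bullet> (M *v x k)) + (\<Sum>k<r. y k \<bullet> (M *v y k)))"
    by (simp only: sum.distrib[symmetric] sum_distrib_left)
  also have "\<dots> \<le> \<epsilon> / 2 * (b + (1 + \<epsilon>) * a)"
  proof -
    have "(\<Sum>k<r. x k \<bullet> (M *v x k)) \<le> b"
      using psd_sum_energy_matpow_le[OF assms(2)] by (simp add: x_def M_def b_def)
    moreover have "(\<Sum>k<r. y k \<bullet> (M *v y k)) \<le> (1 + \<epsilon>) * a"
    proof -
      have "(\<Sum>k<r. y k \<bullet> (M *v y k)) = (\<Sum>k<r. (matpow A k *v v) \<bullet> (M *v (matpow A k *v v)))"
        using sum.nat_diff_reindex[of "\<lambda>k. (matpow A k *v v) \<bullet> (M *v (matpow A k *v v))" r]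
        by (simp add: y_def)
      also have "\<dots> \<le> (\<Sum>k<r. (1 + \<epsilon>) * ((matpow A k *v v) \<bullet> ((mat 1 - A) *v (matpow A k *v v))))"
        by (intro sum_mono M_le)
      also have "\<dots> = (1 + \<epsilon>) * (\<Sum>k<r. (matpow A k *v v) \<bullet> ((mat 1 - A) *v (matpow A k *v v)))"
        by (simp add: sum_distrib_left)
      also have "\<dots> \<le> (1 + \<epsilon>) * a"
        using psd_sum_energy_matpow_le[OF assms(1)] assms(5) by (simp add: a_def)
      finally show ?thesis .
    qed
    ultimately show ?thesis using assms(5) by (intro mult_left_mono) simp_all
  qed
  finally show ?thesis by (simp add: add.commute)
qed

theorem approx_eps_one_minus_matpow:
  fixes A B :: "real^'n^'n"
  assumes "psd A" "psd B" "spec_norm B \<le> 1"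
    and "approx_eps (mat 1 - A) \<epsilon> (mat 1 - B)" "approx_eps (mat 1 - B) \<epsilon> (mat 1 - A)"
    and "0 \<le> \<epsilon>" "\<epsilon> \<le> 1/2"
  shows "approx_eps (mat 1 - matpow A r) (2 * \<epsilon>) (mat 1 - matpow B r)"
  using relative_bound_of_abs_diff_le[OF spec_norm_le_one_inner_mat_one_minus_matpow[OF assms(3)]
      assms(6,7) abs_inner_one_minus_matpow_diff_le[OF assms(1,2,4,5,6)]]
  unfolding approx_eps_def by blast

theorem mainTheorem9:
  fixes A B :: "real^'n^'n" and r :: nat and \<epsilon> :: real
  assumes "r > 0"
    and "psd A" and "psd B"
    and "spec_norm A \<le> 1" and "spec_norm B \<le> 1"
    and "approx_eps (mat 1 - A) \<epsilon> (mat 1 - B)"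
    and "approx_eps (mat 1 - B) \<epsilon> (mat 1 - A)"
    and "0 \<le> \<epsilon>" and "\<epsilon> \<le> 1 / (2 * real (bit_length r))"
  shows "approx_eps (mat 1 - matpow A r) (2 * \<epsilon> * real (bit_length r)) (mat 1 - matpow B r)"
proof -
  have L: "1 \<le> real (bit_length r)"
    using assms(1) by (subst bit_length.simps) simp
  then have "1 / (2 * real (bit_length r)) \<le> 1/2"
    by (simp add: field_simps)
  with assms(9) have "\<epsilon> \<le> 1/2" by linarith
  have "2 * \<epsilon> \<le> 2 * \<epsilon> * real (bit_length r)"
    using L assms(8) by (simp add: mult_le_cancel_left1)
  with approx_eps_one_minus_matpow[OF assms(2,3,5,6,7,8) \<open>\<epsilon> \<le> 1/2\<close>]
  show ?thesis
    by (rule approx_eps_mono) (rule spec_norm_le_one_inner_mat_one_minus_matpow[OF assms(5)])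
qed

end
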